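(* Let $G=(V,E)$ be an $r$-rank connected graph and let $X,Y\subseteq V$ be $r$-splits of $G$ with $|X\cap Y|\ge r$. Then $X\cup Y$ is an $r$-split of $G$.
   Context: For $X\subseteq V$, $\overline X=V\setminus X$, and $\rho(X)$ is the rank over $\mathbb F_2$ of the submatrix of the adjacency matrix of $G$ with rows indexed by $X$ and columns by $\overline X$. $X$ is a $k$-split if $\rho(X)\le k$, and trivial if $\rho(X)=\min(|X|,|\overline X|)$. $G$ is $r$-rank connected if every $k$-split with $k<r$ is trivial. *)

theory Defs
  imports Complex_Main "HOL-Library.Z2" "HOL-Library.Function_Algebras"
begin

definition gf2_scale :: "bit \<Rightarrow> ('a \<Rightarrow> bit) \<Rightarrow> ('a \<Rightarrow> bit)" where
  "gf2_scale c f = (\<lambda>y. c * f y)"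

global_interpretation gf2: vector_space "gf2_scale :: bit \<Rightarrow> ('a \<Rightarrow> bit) \<Rightarrow> ('a \<Rightarrow> bit)"
  defines gf2_dim = gf2.dim
  by unfold_locales (auto simp: gf2_scale_def fun_eq_iff algebra_simps)

definition simple_graph :: "'a set \<Rightarrow> ('a \<Rightarrow> 'a \<Rightarrow> bool) \<Rightarrow> bool" where
  "simple_graph V E \<longleftrightarrow> finite V \<and> (\<forall>x y. E x y \<longrightarrow> E y x) \<and> (\<forall>x. \<not> E x x)
     \<and> (\<forall>x y. E x y \<longrightarrow> x \<in> V \<and> y \<in> V)"

text \<open>Row x of the submatrix of the adjacency matrix with rows X and columns V - X
(entries outside the column set V - X are set to 0).\<close>
definition cut_row :: "'a set \<Rightarrow> ('a \<Rightarrow> 'a \<Rightarrow> bool) \<Rightarrow> 'a set \<Rightarrow> 'a \<Rightarrow> ('a \<Rightarrow> bit)" where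
  "cut_row V E X x = (\<lambda>y. if y \<in> V - X then of_bool (E x y) else 0)"

text \<open>\<rho>(X): rank over GF(2) of the submatrix (= dimension of its row space).\<close>
definition cutrank :: "'a set \<Rightarrow> ('a \<Rightarrow> 'a \<Rightarrow> bool) \<Rightarrow> 'a set \<Rightarrow> nat" where
  "cutrank V E X = gf2_dim (cut_row V E X ` X)"

definition k_split :: "'a set \<Rightarrow> ('a \<Rightarrow> 'a \<Rightarrow> bool) \<Rightarrow> nat \<Rightarrow> 'a set \<Rightarrow> bool" where
  "k_split V E k X \<longleftrightarrow> X \<subseteq> V \<and> cutrank V E X \<le> k"

definition trivial_split :: "'a set \<Rightarrow> ('a \<Rightarrow> 'a \<Rightarrow> bool) \<Rightarrow> 'a set \<Rightarrow> bool" where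
  "trivial_split V E X \<longleftrightarrow> cutrank V E X = min (card X) (card (V - X))"

definition rank_connected :: "'a set \<Rightarrow> ('a \<Rightarrow> 'a \<Rightarrow> bool) \<Rightarrow> nat \<Rightarrow> bool" where
  "rank_connected V E r \<longleftrightarrow>
     (\<forall>k X. k < r \<longrightarrow> k_split V E k X \<longrightarrow> trivial_split V E X)"

end

theory Submission
  imports Defs
begin

text \<open>The cut-rank function is submodular:
\<rho>(X \<inter> Y) + \<rho>(X \<union> Y) \<le> \<rho>(X) + \<rho>(Y).
If \<rho>(X \<inter> Y) \<ge> r this gives \<rho>(X \<union> Y) \<le> r at once. Otherwise X \<inter> Y is a split
of order below r, hence trivial, and since |X \<inter> Y| \<ge> r its rank is |V - (X \<inter> Y)|; then
\<rho>(X \<union> Y) \<le> |V - (X \<union> Y)| \<le> |V - (X \<inter> Y)| < r.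

Submodularity is proved by counting: a GF(2)-space of dimension d has 2^d elements, so
rank-nullity and the Grassmann formula become product formulas for the cardinalities of
finite subspaces. Let U(X) = row_space E X be the span of the full adjacency rows of X and
K(X) = cut_kernel V E X the vectors of U(X) vanishing on V - X, so |U(X)| = 2^\<rho>(X) |K(X)|.
Then U(X \<union> Y) = U(X) + U(Y) and K(X) + K(Y) \<subseteq> K(X \<union> Y); restricting U(X) \<inter> U(Y) to
V - (X \<inter> Y) has kernel K(X) \<inter> K(Y) and an image containing that of U(X \<inter> Y).\<close>

lemma gf2_scale_of_bool: "gf2_scale (of_bool P) v = (if P then v else 0)"
  by (simp add: gf2_scale_def fun_eq_iff)

lemma gf2_sum_scale_of_bool:
  assumes "finite B"
  shows "(\<Sum>v\<in>B. gf2_scale (of_bool (v \<in> T)) v) = \<Sum>(B \<inter> T)"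
  using assms by (simp add: gf2_scale_of_bool sum.If_cases)

lemma gf2_span_eq_subset_sums:
  assumes "finite S"
  shows "gf2.span S = Sum ` Pow S"
proof
  show "Sum ` Pow S \<subseteq> gf2.span S"
    by (blast intro: gf2.span_sum gf2.span_base)
  have bit_eq: "c = of_bool (c = 1)" for c :: bit
    by (cases c) simp_all
  have "(\<Sum>v\<in>S. gf2_scale (u v) v) = \<Sum>(S \<inter> {v. u v = 1})" for u :: "('a \<Rightarrow> bit) \<Rightarrow> bit"
    using gf2_sum_scale_of_bool[OF assms, of "{v. u v = 1}"] by (simp only: mem_Collect_eq flip: bit_eq)
  then show "gf2.span S \<subseteq> Sum ` Pow S"
    unfolding gf2.span_finite[OF assms] by auto
qed

lemma finite_gf2_span: "finite S \<Longrightarrow> finite (gf2.span S)"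
  by (simp add: gf2_span_eq_subset_sums)

lemma inj_on_Sum_Pow_gf2_independent:
  assumes indep: "gf2.independent B" and "finite B"
  shows "inj_on Sum (Pow B)"
proof (rule inj_onI)
  fix T1 T2 assume T: "T1 \<in> Pow B" "T2 \<in> Pow B" and eq: "\<Sum>T1 = \<Sum>T2"
  define u :: "('a \<Rightarrow> bit) \<Rightarrow> bit" where "u v = of_bool (v \<in> T1) - of_bool (v \<in> T2)" for v
  have "(\<Sum>v\<in>B. gf2_scale (u v) v) = \<Sum>(B \<inter> T1) - \<Sum>(B \<inter> T2)"
    unfolding u_def gf2.scale_left_diff_distrib sum_subtractf
    using gf2_sum_scale_of_bool[OF \<open>finite B\<close>] by simp
  also have "\<dots> = 0"
    using T eq by (simp add: Int_absorb1)
  finally have "u v = 0" if "v \<in> B" for v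
    using gf2.independentD[OF indep \<open>finite B\<close> subset_refl] that by blast
  then show "T1 = T2"
    using T by (auto simp: u_def)
qed

lemma card_gf2_span:
  assumes "finite S"
  shows "card (gf2.span S) = 2 ^ gf2_dim S"
proof -
  obtain B where B: "B \<subseteq> S" "gf2.independent B" "S \<subseteq> gf2.span B" "card B = gf2_dim S"
    using gf2.basis_exists by blast
  have "finite B"
    using B(1) assms finite_subset by blast
  have "gf2.span S = gf2.span B"
    using B(1,3) by (metis gf2.span_mono gf2.span_span subset_antisym)
  also have "\<dots> = Sum ` Pow B"
    by (rule gf2_span_eq_subset_sums[OF \<open>finite B\<close>])
  finally have "card (gf2.span S) = card (Pow B)"
    using card_image[OF inj_on_Sum_Pow_gf2_independent[OF B(2) \<open>finite B\<close>]] by simp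
  then show ?thesis
    using B(4) \<open>finite B\<close> by (simp add: card_Pow)
qed

lemma card_eq_card_image_mult_fibre:
  assumes "finite U" and "\<And>w. w \<in> h ` U \<Longrightarrow> card {u \<in> U. h u = w} = k"
  shows "card U = card (h ` U) * k"
proof -
  have "card U = card (\<Union>w\<in>h ` U. {u \<in> U. h u = w})"
    by (rule arg_cong[where f = card]) auto
  also have "\<dots> = (\<Sum>w\<in>h ` U. card {u \<in> U. h u = w})"
    using assms(1) by (intro card_UN_disjoint) auto
  also have "\<dots> = card (h ` U) * k"
    using assms(2) by simp
  finally show ?thesis .
qed

context vector_space
begin

lemma card_subspace_eq_card_image_mult_card_kernel:
  fixes h :: "'b \<Rightarrow> 'c::ab_group_add"
  assumes "subspace U" "finite U" and additive: "\<And>x y. h (x + y) = h x + h y"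
  shows "card U = card (h ` U) * card {u \<in> U. h u = 0}"
proof (rule card_eq_card_image_mult_fibre[OF \<open>finite U\<close>])
  fix w assume "w \<in> h ` U"
  then obtain u0 where "u0 \<in> U" "w = h u0" by blast
  have h_diff: "h (u - u0) = h u - h u0" for u
    using additive[of "u - u0" u0] by (simp add: eq_diff_eq)
  have "{u \<in> U. h u = w} = (\<lambda>c. u0 + c) ` {c \<in> U. h c = 0}"
  proof (intro equalityI subsetI)
    fix u assume "u \<in> {u \<in> U. h u = w}"
    then have "u - u0 \<in> {c \<in> U. h c = 0}" and "u = u0 + (u - u0)"
      using \<open>u0 \<in> U\<close> \<open>w = h u0\<close> \<open>subspace U\<close> h_diff by (auto intro: subspace_diff)
    then show "u \<in> (\<lambda>c. u0 + c) ` {c \<in> U. h c = 0}" by blast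
  qed (use \<open>u0 \<in> U\<close> \<open>w = h u0\<close> \<open>subspace U\<close> additive in \<open>auto intro: subspace_add\<close>)
  then show "card {u \<in> U. h u = w} = card {u \<in> U. h u = 0}"
    by (simp add: card_image)
qed

lemma card_subspace_mult_card_subspace:
  assumes "subspace A" "subspace B" "finite A" "finite B"
  shows "card A * card B = card {a + b | a b. a \<in> A \<and> b \<in> B} * card (A \<inter> B)"
proof -
  let ?h = "\<lambda>(a, b). a + b"
  have "card (A \<times> B) = card (?h ` (A \<times> B)) * card (A \<inter> B)"
  proof (rule card_eq_card_image_mult_fibre)
    show "finite (A \<times> B)"
      using assms by simp
    fix w assume "w \<in> ?h ` (A \<times> B)"
    then obtain a0 b0 where "a0 \<in> A" "b0 \<in> B" "w = a0 + b0" by force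
    have "{p \<in> A \<times> B. ?h p = w} = (\<lambda>c. (a0 + c, b0 - c)) ` (A \<inter> B)"
    proof (intro equalityI subsetI)
      fix p assume "p \<in> {p \<in> A \<times> B. ?h p = w}"
      then obtain a b where "p = (a, b)" "a \<in> A" "b \<in> B" "a + b = a0 + b0"
        using \<open>w = a0 + b0\<close> by (cases p) auto
      have "a - a0 \<in> A" "b0 - b \<in> B"
        using assms(1,2) \<open>a0 \<in> A\<close> \<open>b0 \<in> B\<close> \<open>a \<in> A\<close> \<open>b \<in> B\<close> by (auto intro: subspace_diff)
      moreover have "b0 - b = a - a0"
        using \<open>a + b = a0 + b0\<close> by (simp add: algebra_simps)
      ultimately have "a - a0 \<in> A \<inter> B"
        by simp
      moreover have "p = (a0 + (a - a0), b0 - (a - a0))"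
        using \<open>p = (a, b)\<close> \<open>b0 - b = a - a0\<close> by (simp add: algebra_simps)
      ultimately show "p \<in> (\<lambda>c. (a0 + c, b0 - c)) ` (A \<inter> B)" by blast
    qed (use assms(1,2) \<open>a0 \<in> A\<close> \<open>b0 \<in> B\<close> \<open>w = a0 + b0\<close> in \<open>auto intro: subspace_add subspace_diff\<close>)
    moreover have "inj_on (\<lambda>c. (a0 + c, b0 - c)) (A \<inter> B)"
      by (rule inj_onI) simp
    ultimately show "card {p \<in> A \<times> B. ?h p = w} = card (A \<inter> B)"
      by (simp add: card_image)
  qed
  moreover have "?h ` (A \<times> B) = {a + b | a b. a \<in> A \<and> b \<in> B}"
    by force
  ultimately show ?thesis
    by (simp add: card_cartesian_product)
qed

end

definition adj_row :: "('a \<Rightarrow> 'a \<Rightarrow> bool) \<Rightarrow> 'a \<Rightarrow> 'a \<Rightarrow> bit" where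
  "adj_row E x = (\<lambda>y. of_bool (E x y))"

definition restrict_to :: "'a set \<Rightarrow> ('a \<Rightarrow> bit) \<Rightarrow> 'a \<Rightarrow> bit" where
  "restrict_to Q f = (\<lambda>y. if y \<in> Q then f y else 0)"

definition row_space :: "('a \<Rightarrow> 'a \<Rightarrow> bool) \<Rightarrow> 'a set \<Rightarrow> ('a \<Rightarrow> bit) set" where
  "row_space E X = gf2.span (adj_row E ` X)"

definition cut_kernel :: "'a set \<Rightarrow> ('a \<Rightarrow> 'a \<Rightarrow> bool) \<Rightarrow> 'a set \<Rightarrow> ('a \<Rightarrow> bit) set" where
  "cut_kernel V E X = {u \<in> row_space E X. restrict_to (V - X) u = 0}"

lemma restrict_to_add: "restrict_to Q (f + g) = restrict_to Q f + restrict_to Q g"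
  by (simp add: restrict_to_def fun_eq_iff)

lemma restrict_to_eq_0_iff: "restrict_to Q f = 0 \<longleftrightarrow> (\<forall>y\<in>Q. f y = 0)"
  by (auto simp: restrict_to_def fun_eq_iff)

lemma module_hom_restrict_to: "module_hom gf2_scale gf2_scale (restrict_to Q)"
  by (simp add: module_hom_iff gf2.module_axioms restrict_to_add)
    (simp add: restrict_to_def gf2_scale_def fun_eq_iff)

lemma cut_row_eq: "cut_row V E X = restrict_to (V - X) \<circ> adj_row E"
  by (simp add: cut_row_def restrict_to_def adj_row_def fun_eq_iff)

lemma finite_row_space: "finite X \<Longrightarrow> finite (row_space E X)"
  by (simp add: row_space_def finite_gf2_span)

lemma subspace_row_space: "gf2.subspace (row_space E X)"
  by (simp add: row_space_def)

lemma row_space_mono: "X \<subseteq> Y \<Longrightarrow> row_space E X \<subseteq> row_space E Y"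
  by (simp add: row_space_def gf2.span_mono image_mono)

lemma row_space_Un:
  "row_space E (X \<union> Y) = {a + b | a b. a \<in> row_space E X \<and> b \<in> row_space E Y}"
  by (simp add: row_space_def image_Un gf2.span_Un)

lemma two_pow_cutrank:
  assumes "finite X"
  shows "2 ^ cutrank V E X = card (restrict_to (V - X) ` row_space E X)"
proof -
  have "gf2.span (cut_row V E X ` X) = restrict_to (V - X) ` row_space E X"
    unfolding cut_row_eq image_comp[symmetric] row_space_def
    by (rule module_hom.span_image[OF module_hom_restrict_to])
  then show ?thesis
    unfolding cutrank_def using card_gf2_span assms by (metis finite_imageI)
qed

lemma card_row_space:
  assumes "finite X"
  shows "card (row_space E X) = 2 ^ cutrank V E X * card (cut_kernel V E X)"
proof -
  have "card (row_space E X) = card (restrict_to (V - X) ` row_space E X) * card (cut_kernel V E X)"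
    unfolding cut_kernel_def
    using subspace_row_space finite_row_space[OF assms] restrict_to_add
    by (rule gf2.card_subspace_eq_card_image_mult_card_kernel[where h = "restrict_to (V - X)"])
  then show ?thesis
    by (simp add: two_pow_cutrank[OF assms])
qed

lemma subspace_cut_kernel: "gf2.subspace (cut_kernel V E X)"
proof -
  have "cut_kernel V E X = row_space E X \<inter> {u. restrict_to (V - X) u = 0}"
    by (auto simp: cut_kernel_def)
  then show ?thesis
    using gf2.subspace_inter subspace_row_space module_hom.subspace_kernel[OF module_hom_restrict_to]
    by metis
qed

lemma finite_cut_kernel: "finite X \<Longrightarrow> finite (cut_kernel V E X)"
  by (simp add: cut_kernel_def finite_row_space)

lemma card_cut_kernel_pos: "finite X \<Longrightarrow> card (cut_kernel V E X) > 0"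
  using finite_cut_kernel gf2.subspace_0[OF subspace_cut_kernel] card_gt_0_iff by blast

lemma card_row_space_mult_card_row_space:
  assumes "finite X" "finite Y"
  shows "card (row_space E X) * card (row_space E Y)
    = card (row_space E (X \<union> Y)) * card (row_space E X \<inter> row_space E Y)"
  unfolding row_space_Un
  using subspace_row_space subspace_row_space finite_row_space[OF assms(1)] finite_row_space[OF assms(2)]
  by (rule gf2.card_subspace_mult_card_subspace)

lemma two_pow_cutrank_Int_le:
  assumes "finite X" "finite Y"
  shows "2 ^ cutrank V E (X \<inter> Y) * card (cut_kernel V E X \<inter> cut_kernel V E Y)
    \<le> card (row_space E X \<inter> row_space E Y)"
proof -
  let ?U = "row_space E X \<inter> row_space E Y" and ?h = "restrict_to (V - X \<inter> Y)"
  have "finite (X \<inter> Y)" "finite ?U"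
    using assms(1) finite_row_space[OF assms(1)] by blast+
  have "card ?U = card (?h ` ?U) * card {u \<in> ?U. ?h u = 0}"
    using gf2.subspace_inter[OF subspace_row_space subspace_row_space] \<open>finite ?U\<close> restrict_to_add
    by (rule gf2.card_subspace_eq_card_image_mult_card_kernel[where h = ?h])
  moreover have "{u \<in> ?U. ?h u = 0} = cut_kernel V E X \<inter> cut_kernel V E Y"
    by (auto simp: cut_kernel_def restrict_to_eq_0_iff)
  moreover have "2 ^ cutrank V E (X \<inter> Y) \<le> card (?h ` ?U)"
    unfolding two_pow_cutrank[OF \<open>finite (X \<inter> Y)\<close>]
    using row_space_mono[of "X \<inter> Y" X E] row_space_mono[of "X \<inter> Y" Y E] \<open>finite ?U\<close>
    by (intro card_mono) auto
  ultimately show ?thesis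
    by simp
qed

lemma two_pow_cutrank_Un_le:
  assumes "finite X" "finite Y"
  shows "2 ^ cutrank V E (X \<union> Y) * card {a + b | a b. a \<in> cut_kernel V E X \<and> b \<in> cut_kernel V E Y}
    \<le> card (row_space E (X \<union> Y))"
proof -
  have "{a + b | a b. a \<in> cut_kernel V E X \<and> b \<in> cut_kernel V E Y} \<subseteq> cut_kernel V E (X \<union> Y)"
  proof clarify
    fix a b assume "a \<in> cut_kernel V E X" "b \<in> cut_kernel V E Y"
    then have "a + b \<in> row_space E (X \<union> Y)" and "\<forall>y\<in>V - (X \<union> Y). (a + b) y = 0"
      by (auto simp: cut_kernel_def row_space_Un restrict_to_eq_0_iff)
    then show "a + b \<in> cut_kernel V E (X \<union> Y)"
      by (simp add: cut_kernel_def restrict_to_eq_0_iff)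
  qed
  then have "card {a + b | a b. a \<in> cut_kernel V E X \<and> b \<in> cut_kernel V E Y}
      \<le> card (cut_kernel V E (X \<union> Y))"
    using assms by (intro card_mono finite_cut_kernel) auto
  then show ?thesis
    using card_row_space[of "X \<union> Y" E V] assms by simp
qed

lemma cutrank_submodular:
  assumes "finite X" "finite Y"
  shows "cutrank V E (X \<inter> Y) + cutrank V E (X \<union> Y) \<le> cutrank V E X + cutrank V E Y"
proof -
  let ?A = "cut_kernel V E X" and ?B = "cut_kernel V E Y"
  have "(2::nat) ^ (cutrank V E (X \<inter> Y) + cutrank V E (X \<union> Y)) * (card ?A * card ?B)
      = (2 ^ cutrank V E (X \<inter> Y) * card (?A \<inter> ?B))
        * (2 ^ cutrank V E (X \<union> Y) * card {a + b | a b. a \<in> ?A \<and> b \<in> ?B})"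
    using gf2.card_subspace_mult_card_subspace[OF subspace_cut_kernel subspace_cut_kernel
        finite_cut_kernel[OF assms(1)] finite_cut_kernel[OF assms(2)]]
    by (simp add: power_add ac_simps)
  also have "\<dots> \<le> card (row_space E X \<inter> row_space E Y) * card (row_space E (X \<union> Y))"
    using two_pow_cutrank_Int_le[OF assms] two_pow_cutrank_Un_le[OF assms] by (rule mult_le_mono)
  also have "\<dots> = card (row_space E X) * card (row_space E Y)"
    using card_row_space_mult_card_row_space[OF assms] by simp
  also have "\<dots> = 2 ^ (cutrank V E X + cutrank V E Y) * (card ?A * card ?B)"
    using card_row_space[OF assms(1)] card_row_space[OF assms(2)] by (simp add: power_add ac_simps)
  finally have "(2::nat) ^ (cutrank V E (X \<inter> Y) + cutrank V E (X \<union> Y))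
      \<le> 2 ^ (cutrank V E X + cutrank V E Y)"
    using card_cut_kernel_pos[OF assms(1)] card_cut_kernel_pos[OF assms(2)] by simp
  then show ?thesis
    by simp
qed

lemma cutrank_le_card_Diff:
  assumes "finite V" "finite X"
  shows "cutrank V E X \<le> card (V - X)"
proof -
  have "card (restrict_to (V - X) ` row_space E X) \<le> card (Pow (V - X))"
  proof (rule card_inj_on_le[where f = "\<lambda>f. {y. f y = 1}"])
    show "inj_on (\<lambda>f. {y. f y = 1}) (restrict_to (V - X) ` row_space E X)"
    proof (rule inj_onI)
      fix f g :: "'a \<Rightarrow> bit" assume "{y. f y = 1} = {y. g y = 1}"
      then have "f y = 1 \<longleftrightarrow> g y = 1" for y
        by blast
      then show "f = g"
        by (metis bit_not_one_iff ext)
    qed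
  qed (auto simp: restrict_to_def assms(1) split: if_splits)
  then have "(2::nat) ^ cutrank V E X \<le> 2 ^ card (V - X)"
    using two_pow_cutrank[OF assms(2)] assms(1) by (simp add: card_Pow)
  then show ?thesis
    by simp
qed

lemma cutrank_Un_le_of_trivial_split_Int:
  assumes "finite V" "X \<subseteq> V" "Y \<subseteq> V"
    and "trivial_split V E (X \<inter> Y)" and "cutrank V E (X \<inter> Y) < card (X \<inter> Y)"
  shows "cutrank V E (X \<union> Y) \<le> cutrank V E (X \<inter> Y)"
proof -
  have "finite X" "finite Y"
    using assms(1-3) finite_subset by blast+
  then have "cutrank V E (X \<union> Y) \<le> card (V - (X \<union> Y))"
    using assms(1) by (simp add: cutrank_le_card_Diff)
  also have "\<dots> \<le> card (V - X \<inter> Y)"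
    using assms(1) by (intro card_mono) auto
  also have "\<dots> = cutrank V E (X \<inter> Y)"
    using assms(4,5) by (simp add: trivial_split_def min_def split: if_splits)
  finally show ?thesis .
qed

theorem mainTheorem6:
  fixes V :: "'a set" and E :: "'a \<Rightarrow> 'a \<Rightarrow> bool" and r :: nat and X Y :: "'a set"
  assumes "simple_graph V E"
    and "rank_connected V E r"
    and "k_split V E r X" and "k_split V E r Y"
    and "card (X \<inter> Y) \<ge> r"
  shows "k_split V E r (X \<union> Y)"
proof -
  have "finite V"
    using assms(1) by (simp add: simple_graph_def)
  have "X \<subseteq> V" "Y \<subseteq> V" "cutrank V E X \<le> r" "cutrank V E Y \<le> r"
    using assms(3,4) by (simp_all add: k_split_def)
  have "cutrank V E (X \<union> Y) \<le> r"
  proof (cases "cutrank V E (X \<inter> Y) < r")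
    case True
    have "k_split V E (cutrank V E (X \<inter> Y)) (X \<inter> Y)"
      using \<open>X \<subseteq> V\<close> by (auto simp: k_split_def)
    then have "trivial_split V E (X \<inter> Y)"
      using assms(2) True by (auto simp: rank_connected_def)
    then show ?thesis
      using cutrank_Un_le_of_trivial_split_Int[OF \<open>finite V\<close> \<open>X \<subseteq> V\<close> \<open>Y \<subseteq> V\<close>] True assms(5)
      by fastforce
  next
    case False
    have "finite X" "finite Y"
      using \<open>finite V\<close> \<open>X \<subseteq> V\<close> \<open>Y \<subseteq> V\<close> finite_subset by blast+
    with False show ?thesis
      using cutrank_submodular[of X Y V E] \<open>cutrank V E X \<le> r\<close> \<open>cutrank V E Y \<le> r\<close> by linarith
  qed
  then show ?thesis
    using \<open>X \<subseteq> V\<close> \<open>Y \<subseteq> V\<close> by (simp add: k_split_def)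
qed

end
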